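(* Let $E\to M$ be a vector bundle with nondegenerate symmetric fiber metric $h$ and metric connection $\nabla$, and consider the Rothstein–Poisson bracket on $\Gamma^\infty(\bigwedge^\bullet\tau^\sharp E)$. Let $u_1,\dots,u_K$ be a local frame of $E$ such that the functions $h_{AB}=h(u_A,u_B)$ are constant, and define the local sections $$r_i=p_i-\tfrac12\tau^\sharp\big(h^{AB}\Gamma^C_{iA}u_B\wedge u_C\big).$$ Then $\{q^i,r_j\}=\delta^i_j$, $\{\tau^\sharp u_A,\tau^\sharp u_B\}=h_{AB}$, and $\{q^i,q^j\}=\{q^i,\tau^\sharp u_A\}=\{r_i,r_j\}=\{r_i,\tau^\sharp u_A\}=0$.
   Context: $\tau:T^\ast M\to M$ is the cotangent projection, $(q^i,p_i)$ the bundle coordinates on $T^\ast M$ induced by local coordinates $x^i$ on $M$, $\tau^\sharp E$ the pullback bundle with pullback connection $\tau^\sharp\nabla$, and $\tau^\sharp u_A$ the pullback frame. $(h^{AB})$ is the inverse matrix of $(h_{AB})$, $\Gamma^B_{iA}$ the Christoffel symbols ($\nabla_{\partial/\partial x^i}u_A=\Gamma^B_{iA}u_B$), $R^C_{Aij}$ the curvature components ($R(\partial_i,\partial_j)u_A=R^C_{Aij}u_C$), $u^A$ the dual frame. For $\sigma\in E^\ast$, $i(\sigma)$ is the left interior product on $\bigwedge^\bullet E$ and $j(\sigma)\psi=(-1)^{m-1}i(\sigma)\psi$ for $\psi$ of Grassmann degree $m$; $\partial\varphi/\partial p_i:=(\tau^\sharp\nabla)_{\partial/\partial p_i}\varphi$.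 The Rothstein–Poisson bracket is the super-Poisson bracket on $\Gamma^\infty(\bigwedge^\bullet\tau^\sharp E)$ (functions on $T^\ast M$ included in degree $0$) given locally by $\{\varphi,\psi\}=(\tau^\sharp\nabla)_{\partial/\partial q^i}\varphi\wedge\frac{\partial\psi}{\partial p_i}-\frac{\partial\varphi}{\partial p_i}\wedge(\tau^\sharp\nabla)_{\partial/\partial q^i}\psi-\frac12\tau^\sharp(h^{AB}R^C_{Aij}u_B\wedge u_C)\wedge\frac{\partial\varphi}{\partial p_i}\wedge\frac{\partial\psi}{\partial p_j}+h_{AB}\,j(u^A)\varphi\wedge i(u^B)\psi$. *)

theory Defs
  imports "HOL-Analysis.Analysis"
begin

text \<open>Everything is local: a coordinate chart with image an open set U in real^'n::finite
 (coordinates x^i, i :: 'n), a local frame u_0,...,u_{K-1} of E over it (frame indices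
 are naturals A < K).  T*U is U x real^'n::finite with bundle coordinates (q,p).
 Elements of the exterior algebra of the fibre are represented by their coefficients
 with respect to the basis u_S = u_{s1} wedge ... wedge u_{sm} (s1 < ... < sm, S a finite
 subset of {..<K}).\<close>

type_synonym ext = "nat set \<Rightarrow> real"
type_synonym 'n sect = "(real^'n) \<times> (real^'n) \<Rightarrow> ext"

definition wsign :: "nat set \<Rightarrow> nat set \<Rightarrow> real" where
  "wsign S T = (-1) ^ card {(s,t). s \<in> S \<and> t \<in> T \<and> t < s}"

text \<open>u_S wedge u_T = wsign S T * u_(S union T) for disjoint S, T.\<close>
definition wedge :: "ext \<Rightarrow> ext \<Rightarrow> ext" (infixl "\<and>\<^sub>e" 70) where
  "wedge a b = (\<lambda>S. \<Sum>T\<in>Pow S. wsign T (S - T) * a T * b (S - T))"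

definition escal :: "real \<Rightarrow> ext" where
  "escal c = (\<lambda>S. if S = {} then c else 0)"

definition ebasis :: "nat \<Rightarrow> ext" where
  "ebasis A = (\<lambda>S. if S = {A} then 1 else 0)"

text \<open>left interior product i(u^A): i(u^A)(u_A wedge u_S) = u_S for A not in S\<close>
definition eint :: "nat \<Rightarrow> ext \<Rightarrow> ext" where
  "eint A a = (\<lambda>S. if A \<in> S then 0 else wsign {A} S * a (insert A S))"

text \<open>j(u^A) psi = (-1)^(m-1) i(u^A) psi on Grassmann degree m (extended linearly);
 the output of i(u^A) on degree m has degree m-1.\<close>
definition ejnt :: "nat \<Rightarrow> ext \<Rightarrow> ext" where
  "ejnt A a = (\<lambda>S. (-1) ^ card S * eint A a S)"

definition pdiff :: "((real^'n::finite) \<Rightarrow> real) \<Rightarrow> 'n \<Rightarrow> (real^'n::finite) \<Rightarrow> real" where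
  "pdiff f i q = deriv (\<lambda>t. f (q + t *\<^sub>R axis i 1)) 0"

definition iter_pdiff :: "'n list \<Rightarrow> ((real^'n::finite) \<Rightarrow> real) \<Rightarrow> (real^'n::finite) \<Rightarrow> real" where
  "iter_pdiff is f = foldr (\<lambda>i g. pdiff g i) is f"

definition smooth_on :: "(real^'n::finite) set \<Rightarrow> ((real^'n::finite) \<Rightarrow> real) \<Rightarrow> bool" where
  "smooth_on U f \<longleftrightarrow> (\<forall>is. continuous_on U (iter_pdiff is f) \<and>
      (\<forall>i. \<forall>q\<in>U. (\<lambda>t. iter_pdiff is f (q + t *\<^sub>R axis i 1)) differentiable (at 0)))"

definition dq :: "('n::finite) sect \<Rightarrow> 'n \<Rightarrow> 'n sect" where
  "dq \<phi> i = (\<lambda>(q,p) S. deriv (\<lambda>t. \<phi> (q + t *\<^sub>R axis i 1, p) S) 0)"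

definition dp :: "('n::finite) sect \<Rightarrow> 'n \<Rightarrow> 'n sect" where
  "dp \<phi> i = (\<lambda>(q,p) S. deriv (\<lambda>t. \<phi> (q, p + t *\<^sub>R axis i 1) S) 0)"

text \<open>Gam q i A B is the Christoffel symbol Gamma^B_{iA}(q):
 nabla_{d/dx^i} u_A = sum_B Gamma^B_{iA} u_B.  The induced connection on the exterior
 bundle acts by the derivation extending u_A |-> sum_B Gamma^B_{iA} u_B, i.e.
 sum_{A,B} Gamma^B_{iA} u_B wedge i(u^A).\<close>
definition conn_der :: "nat \<Rightarrow> ((real^'n::finite) \<Rightarrow> 'n \<Rightarrow> nat \<Rightarrow> nat \<Rightarrow> real) \<Rightarrow> (real^'n::finite) \<Rightarrow> 'n \<Rightarrow> ext \<Rightarrow> ext" where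
  "conn_der K Gam q i a = (\<lambda>S. \<Sum>A<K. \<Sum>B<K. Gam q i A B * (ebasis B \<and>\<^sub>e eint A a) S)"

text \<open>pullback connection in direction d/dq^i (in direction d/dp_i it is just dp)\<close>
definition nablaq :: "nat \<Rightarrow> ((real^'n::finite) \<Rightarrow> 'n \<Rightarrow> nat \<Rightarrow> nat \<Rightarrow> real) \<Rightarrow> 'n sect \<Rightarrow> 'n \<Rightarrow> 'n sect" where
  "nablaq K Gam \<phi> i = (\<lambda>(q,p) S. dq \<phi> i (q,p) S + conn_der K Gam q i (\<phi> (q,p)) S)"

definition pb :: "((real^'n::finite) \<Rightarrow> ext) \<Rightarrow> 'n sect" where
  "pb s = (\<lambda>(q,p). s q)"

text \<open>curv K Gam q C A i j = R^C_{Aij}(q), where R(d_i,d_j)u_A = sum_C R^C_{Aij} u_C and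
 R(X,Y) = nabla_X nabla_Y - nabla_Y nabla_X (coordinate fields commute).\<close>
definition curv :: "nat \<Rightarrow> ((real^'n::finite) \<Rightarrow> 'n \<Rightarrow> nat \<Rightarrow> nat \<Rightarrow> real) \<Rightarrow> (real^'n::finite) \<Rightarrow> nat \<Rightarrow> nat \<Rightarrow> 'n \<Rightarrow> 'n \<Rightarrow> real" where
  "curv K Gam q C A i j =
     nablaq K Gam (nablaq K Gam (pb (\<lambda>_. ebasis A)) j) i (q,0) {C}
   - nablaq K Gam (nablaq K Gam (pb (\<lambda>_. ebasis A)) i) j (q,0) {C}"

definition minv :: "nat \<Rightarrow> (nat \<Rightarrow> nat \<Rightarrow> real) \<Rightarrow> nat \<Rightarrow> nat \<Rightarrow> real" where
  "minv K h = (THE g. (\<forall>A<K. \<forall>C<K. (\<Sum>B<K. g A B * h B C) = (if A = C then 1 else 0)) \<and>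
                      (\<forall>A<K. \<forall>C<K. (\<Sum>B<K. h A B * g B C) = (if A = C then 1 else 0)) \<and>
                      (\<forall>A B. A \<ge> K \<or> B \<ge> K \<longrightarrow> g A B = 0))"

definition fiber_metric :: "(real^'n::finite) set \<Rightarrow> nat \<Rightarrow> ((real^'n::finite) \<Rightarrow> nat \<Rightarrow> nat \<Rightarrow> real) \<Rightarrow> bool" where
  "fiber_metric U K h \<longleftrightarrow>
     (\<forall>A<K. \<forall>B<K. smooth_on U (\<lambda>q. h q A B)) \<and>
     (\<forall>q\<in>U. \<forall>A<K. \<forall>B<K. h q A B = h q B A) \<and>
     (\<forall>q\<in>U. \<forall>v::nat \<Rightarrow> real. (\<forall>B<K. (\<Sum>A<K. v A * h q A B) = 0) \<longrightarrow> (\<forall>A<K. v A = 0))"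

definition metric_connection :: "(real^'n::finite) set \<Rightarrow> nat \<Rightarrow> ((real^'n::finite) \<Rightarrow> nat \<Rightarrow> nat \<Rightarrow> real)
      \<Rightarrow> ((real^'n::finite) \<Rightarrow> 'n \<Rightarrow> nat \<Rightarrow> nat \<Rightarrow> real) \<Rightarrow> bool" where
  "metric_connection U K h Gam \<longleftrightarrow>
     (\<forall>i. \<forall>A<K. \<forall>B<K. smooth_on U (\<lambda>q. Gam q i A B)) \<and>
     (\<forall>q\<in>U. \<forall>i. \<forall>A<K. \<forall>B<K.
        ((\<lambda>t. h (q + t *\<^sub>R axis i 1) A B) has_real_derivative
          (\<Sum>C<K. Gam q i A C * h q C B + Gam q i B C * h q A C)) (at 0))"

definition esum :: "'a set \<Rightarrow> ('a \<Rightarrow> ext) \<Rightarrow> ext" where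
  "esum I f = (\<lambda>S. \<Sum>x\<in>I. f x S)"

definition rothstein :: "nat \<Rightarrow> ((real^'n::finite) \<Rightarrow> nat \<Rightarrow> nat \<Rightarrow> real)
    \<Rightarrow> ((real^'n::finite) \<Rightarrow> 'n \<Rightarrow> nat \<Rightarrow> nat \<Rightarrow> real) \<Rightarrow> 'n sect \<Rightarrow> 'n sect \<Rightarrow> 'n sect" where
  "rothstein K h Gam \<phi> \<psi> = (\<lambda>(q,p). \<lambda>S.
      esum UNIV (\<lambda>i. nablaq K Gam \<phi> i (q,p) \<and>\<^sub>e dp \<psi> i (q,p)) S
    - esum UNIV (\<lambda>i. dp \<phi> i (q,p) \<and>\<^sub>e nablaq K Gam \<psi> i (q,p)) S
    - (1/2) * esum UNIV (\<lambda>i. esum UNIV (\<lambda>j.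
          (esum {..<K} (\<lambda>A. esum {..<K} (\<lambda>B. esum {..<K} (\<lambda>C. \<lambda>T.
               minv K (h q) A B * curv K Gam q C A i j * (ebasis B \<and>\<^sub>e ebasis C) T))))
          \<and>\<^sub>e dp \<phi> i (q,p) \<and>\<^sub>e dp \<psi> j (q,p))) S
    + esum {..<K} (\<lambda>A. esum {..<K} (\<lambda>B. \<lambda>T.
          h q A B * (ejnt A (\<phi> (q,p)) \<and>\<^sub>e eint B (\<psi> (q,p))) T)) S)"

definition qfun :: "('n::finite) \<Rightarrow> 'n sect" where "qfun i = (\<lambda>(q,p). escal (q $ i))"
definition pfun :: "('n::finite) \<Rightarrow> 'n sect" where "pfun i = (\<lambda>(q,p). escal (p $ i))"

definition rfun :: "nat \<Rightarrow> ((real^'n::finite) \<Rightarrow> nat \<Rightarrow> nat \<Rightarrow> real)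
    \<Rightarrow> ((real^'n::finite) \<Rightarrow> 'n \<Rightarrow> nat \<Rightarrow> nat \<Rightarrow> real) \<Rightarrow> 'n \<Rightarrow> 'n sect" where
  "rfun K h Gam i = (\<lambda>x S. pfun i x S - (1/2) * pb (\<lambda>q.
      esum {..<K} (\<lambda>A. esum {..<K} (\<lambda>B. esum {..<K} (\<lambda>C. \<lambda>T.
         minv K (h q) A B * Gam q i A C * (ebasis B \<and>\<^sub>e ebasis C) T)))) x S)"

end

theory Submission
  imports Defs "Jordan_Normal_Form.Determinant"
begin

text \<open>
  In a frame with constant metric coefficients, metric compatibility says that each connection
  matrix Gamma_i is skew with respect to h, so omega_i = h^-1 Gamma_i is antisymmetric and
  r_i = p_i - 1/2 omega_i^BC u_B u_C.  The brackets involving q^i and u_A can be read off the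
  local formula; {r_i, u_A} = - nabla_i u_A + h_BA j(u^B) r_i vanishes because
  j(u^B) r_i = omega_i^BC u_C and h omega_i = Gamma_i.  In {r_i, r_j} the derivatives of
  Gamma from nabla_j r_i - nabla_i r_j cancel those in the curvature term, and the quadratic
  terms add up to the 2-form with coefficient matrix 1/2 h^-1 (Gamma_j Gamma_i + Gamma_i Gamma_j),
  which is symmetric and hence gives the zero 2-form.
\<close>

section \<open>Coefficient calculus in the exterior algebra\<close>

lemma wedge_infinite: "infinite S \<Longrightarrow> (a \<and>\<^sub>e b) S = 0"
  by (simp add: wedge_def)

lemma wsign_empty_left [simp]: "wsign {} S = 1"
  by (simp add: wsign_def)

lemma wsign_empty_right [simp]: "wsign S {} = 1"
  by (simp add: wsign_def)

lemma escal_wedge: "finite S \<Longrightarrow> (escal c \<and>\<^sub>e b) S = c * b S"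
proof -
  assume "finite S"
  have "(escal c \<and>\<^sub>e b) S = (\<Sum>T\<in>Pow S. if T = {} then c * b S else 0)"
    unfolding wedge_def escal_def by (rule sum.cong) auto
  with \<open>finite S\<close> show ?thesis by simp
qed

lemma wedge_escal: "finite S \<Longrightarrow> (a \<and>\<^sub>e escal c) S = c * a S"
proof -
  assume "finite S"
  have "(a \<and>\<^sub>e escal c) S = (\<Sum>T\<in>Pow S. if T = S then c * a S else 0)"
    unfolding wedge_def escal_def by (rule sum.cong) (auto simp: Diff_eq_empty_iff)
  with \<open>finite S\<close> show ?thesis by simp
qed

lemma escal_0: "escal 0 = (\<lambda>_. 0)"
  by (simp add: escal_def fun_eq_iff)

lemma wsign_singletons: "wsign {A} {C} = (if C < A then -1 else 1)"
proof -
  have "{(s, t). s \<in> {A} \<and> t \<in> {C} \<and> t < s} = (if C < A then {(A, C)} else {})"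
    by auto
  then show ?thesis by (simp add: wsign_def)
qed

lemma ebasis_wedge_ebasis:
  "(ebasis B \<and>\<^sub>e ebasis C) S = (if B \<noteq> C \<and> S = {B, C} then (if B < C then 1 else -1) else 0)"
proof (cases "finite S")
  case True
  have split_off_B: "B \<in> S \<and> S - {B} = {C} \<longleftrightarrow> B \<noteq> C \<and> S = {B, C}"
    by blast
  have "(ebasis B \<and>\<^sub>e ebasis C) S = (\<Sum>T\<in>Pow S. if T = {B} then wsign {B} (S - {B}) * ebasis C (S - {B}) else 0)"
    unfolding wedge_def by (rule sum.cong) (auto simp: ebasis_def)
  also have "\<dots> = (if B \<in> S \<and> S - {B} = {C} then wsign {B} {C} else 0)"
    using True by (simp add: ebasis_def)
  also have "\<dots> = (if B \<noteq> C \<and> S = {B, C} then (if B < C then 1 else -1) else 0)"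
    unfolding split_off_B wsign_singletons by (simp add: not_less_iff_gr_or_eq)
  finally show ?thesis .
qed (auto simp: wedge_infinite)

lemma ebasis_wedge_ebasis_swap: "(ebasis C \<and>\<^sub>e ebasis B) S = - (ebasis B \<and>\<^sub>e ebasis C) S"
  by (auto simp: ebasis_wedge_ebasis insert_commute)

lemma wedge_sum_left: "((\<lambda>T. \<Sum>x\<in>I. f x T) \<and>\<^sub>e b) S = (\<Sum>x\<in>I. (f x \<and>\<^sub>e b) S)"
  unfolding wedge_def by (simp add: sum_distrib_left sum_distrib_right sum.swap[of _ I] algebra_simps)

lemma wedge_sum_right: "(a \<and>\<^sub>e (\<lambda>T. \<Sum>x\<in>I. f x T)) S = (\<Sum>x\<in>I. (a \<and>\<^sub>e f x) S)"
  unfolding wedge_def by (simp add: sum_distrib_left sum_distrib_right sum.swap[of _ I] algebra_simps)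

lemma wedge_scale_left: "((\<lambda>T. c * a T) \<and>\<^sub>e b) S = c * (a \<and>\<^sub>e b) S"
  unfolding wedge_def by (simp add: sum_distrib_left algebra_simps)

lemma wedge_scale_right: "(a \<and>\<^sub>e (\<lambda>T. c * b T)) S = c * (a \<and>\<^sub>e b) S"
  unfolding wedge_def by (simp add: sum_distrib_left algebra_simps)

lemma wedge_diff_right: "(a \<and>\<^sub>e (\<lambda>T. b T - b' T)) S = (a \<and>\<^sub>e b) S - (a \<and>\<^sub>e b') S"
  unfolding wedge_def by (simp add: sum_subtractf algebra_simps)

lemma wedge_uminus_right: "(a \<and>\<^sub>e (\<lambda>T. - b T)) S = - (a \<and>\<^sub>e b) S"
  unfolding wedge_def by (simp add: sum_negf)

lemma ebasis_wedge_escal: "(ebasis B \<and>\<^sub>e escal c) = (\<lambda>S. c * ebasis B S)"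
proof
  fix S
  show "(ebasis B \<and>\<^sub>e escal c) S = c * ebasis B S"
    by (cases "finite S") (auto simp: wedge_escal wedge_infinite ebasis_def)
qed

lemma eint_escal: "eint A (escal c) = (\<lambda>_. 0)"
  by (auto simp: eint_def fun_eq_iff escal_def)

lemma ejnt_escal: "ejnt A (escal c) = (\<lambda>_. 0)"
  by (simp add: ejnt_def eint_escal)

lemma eint_ebasis: "eint A (ebasis B) = escal (if A = B then 1 else 0)"
  by (auto simp: eint_def fun_eq_iff escal_def ebasis_def)

lemma ejnt_ebasis: "ejnt A (ebasis B) = escal (if A = B then 1 else 0)"
  by (auto simp: ejnt_def eint_ebasis fun_eq_iff escal_def)

lemma eint_sum: "eint A (\<lambda>S. \<Sum>x\<in>I. f x S) = (\<lambda>S. \<Sum>x\<in>I. eint A (f x) S)"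
  by (auto simp: eint_def fun_eq_iff sum_distrib_left)

lemma eint_scale: "eint A (\<lambda>S. c * a S) = (\<lambda>S. c * eint A a S)"
  by (auto simp: eint_def fun_eq_iff)

lemma eint_diff: "eint A (\<lambda>S. a S - b S) = (\<lambda>S. eint A a S - eint A b S)"
  by (auto simp: eint_def fun_eq_iff algebra_simps)

lemma ejnt_diff_scale: "ejnt A (\<lambda>S. a S - c * b S) = (\<lambda>S. ejnt A a S - c * ejnt A b S)"
  by (simp add: ejnt_def eint_diff eint_scale fun_eq_iff algebra_simps)

lemma insert_eq_iff_Diff: "A \<notin> S \<Longrightarrow> insert A S = T \<longleftrightarrow> A \<in> T \<and> S = T - {A}"
  by blast

lemma eint_ebasis_wedge_ebasis:
  "eint A (ebasis B \<and>\<^sub>e ebasis C) S = (if A = B then ebasis C S else 0) - (if A = C then ebasis B S else 0)"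
proof (cases "A \<in> S")
  case True
  then show ?thesis by (auto simp: eint_def ebasis_def)
next
  case False
  consider "B = C" | "A = B" "B \<noteq> C" | "A = C" "B \<noteq> C" | "A \<noteq> B" "A \<noteq> C"
    by blast
  then show ?thesis
  proof cases
    case 1
    then show ?thesis by (simp add: eint_def ebasis_wedge_ebasis)
  next
    case 2
    then show ?thesis using False
      unfolding eint_def ebasis_wedge_ebasis by (simp add: insert_eq_iff_Diff ebasis_def wsign_singletons)
  next
    case 3
    then have "{B, C} - {C} = {B}"
      by auto
    with 3 False show ?thesis
      unfolding eint_def ebasis_wedge_ebasis by (simp add: insert_eq_iff_Diff ebasis_def wsign_singletons)
  next
    case 4
    then show ?thesis using False
      unfolding eint_def ebasis_wedge_ebasis by (simp add: insert_eq_iff_Diff ebasis_def)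
  qed
qed

section \<open>Forms with matrix coefficients\<close>

lemma index_mult_mat_sum:
  "M \<in> carrier_mat K L \<Longrightarrow> N \<in> carrier_mat L J \<Longrightarrow> A < K \<Longrightarrow> C < J \<Longrightarrow>
    (M * N) $$ (A, C) = (\<Sum>B<L. M $$ (A, B) * N $$ (B, C))"
  by (simp add: scalar_prod_def atLeast0LessThan)

lemma sum_rotate3:
  "(\<Sum>a\<in>A. \<Sum>b\<in>B. \<Sum>c\<in>C. f a b c) = (\<Sum>b\<in>B. \<Sum>c\<in>C. \<Sum>a\<in>A. f a b c)"
  by (subst sum.swap) (rule sum.cong[OF refl], rule sum.swap)

definition form1 :: "real vec \<Rightarrow> ext" where
  "form1 v = (\<lambda>S. \<Sum>B<dim_vec v. v $ B * ebasis B S)"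

definition form2 :: "real mat \<Rightarrow> ext" where
  "form2 M = (\<lambda>S. \<Sum>B<dim_row M. \<Sum>C<dim_col M. M $$ (B, C) * (ebasis B \<and>\<^sub>e ebasis C) S)"

lemma form1_singleton: "C < dim_vec v \<Longrightarrow> form1 v {C} = v $ C"
  by (simp add: form1_def ebasis_def if_distrib[of "\<lambda>x. _ * x"] cong: if_cong)

lemma form1_eq_0: "(\<And>B. S \<noteq> {B}) \<Longrightarrow> form1 v S = 0"
  by (simp add: form1_def ebasis_def)

lemma eint_form1: "A < dim_vec v \<Longrightarrow> eint A (form1 v) = escal (v $ A)"
  unfolding form1_def eint_sum eint_scale eint_ebasis
  by (auto simp: fun_eq_iff escal_def if_distrib[of "\<lambda>x. _ * x"] cong: if_cong)

lemma eint_form2: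
  assumes M: "M \<in> carrier_mat K K" and A: "A < K"
  shows "eint A (form2 M) = form1 (row M A - col M A)"
proof
  fix S
  have "eint A (form2 M) S = (\<Sum>B<K. \<Sum>C<K. if A = B then M $$ (B, C) * ebasis C S else 0)
      - (\<Sum>B<K. \<Sum>C<K. if A = C then M $$ (B, C) * ebasis B S else 0)"
    using M unfolding form2_def eint_sum eint_scale
    by (simp add: eint_ebasis_wedge_ebasis right_diff_distrib sum_subtractf
        if_distrib[of "\<lambda>x. _ * x"] cong: if_cong)
  also have "\<dots> = (\<Sum>C<K. M $$ (A, C) * ebasis C S) - (\<Sum>B<K. M $$ (B, A) * ebasis B S)"
  proof -
    have "(\<Sum>C<K. if P then f C else 0) = (if P then \<Sum>C<K. f C else 0)" for P and f :: "nat \<Rightarrow> real"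
      by simp
    with A show ?thesis
      by simp
  qed
  also have "\<dots> = form1 (row M A - col M A) S"
    using M A by (simp add: form1_def sum_subtractf left_diff_distrib)
  finally show "eint A (form2 M) S = form1 (row M A - col M A) S" .
qed

lemma ejnt_form2:
  assumes "M \<in> carrier_mat K K" "A < K"
  shows "ejnt A (form2 M) = (\<lambda>S. - form1 (row M A - col M A) S)"
proof -
  have "(-1) ^ card S * form1 v S = - form1 v S" for S and v :: "real vec"
    by (cases "\<exists>B. S = {B}") (auto simp: form1_eq_0)
  then show ?thesis
    by (simp add: ejnt_def eint_form2[OF assms])
qed

lemma form1_row_minus_col:
  assumes "M \<in> carrier_mat K K" "transpose_mat M = - M" "A < K"
  shows "form1 (row M A - col M A) = (\<lambda>S. 2 * form1 (row M A) S)"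
proof -
  have "M $$ (C, A) = - M $$ (A, C)" if "C < K" for C
    using arg_cong[OF assms(2), of "\<lambda>X. X $$ (A, C)"] assms(1,3) that by simp
  with assms show ?thesis
    by (simp add: form1_def fun_eq_iff sum_distrib_left mult.assoc)
qed

lemma form2_transpose:
  assumes "M \<in> carrier_mat K K"
  shows "form2 (transpose_mat M) S = - form2 M S"
proof -
  have "form2 (transpose_mat M) S = (\<Sum>C<K. \<Sum>B<K. M $$ (B, C) * (ebasis C \<and>\<^sub>e ebasis B) S)"
    using assms by (simp add: form2_def)
  also have "\<dots> = (\<Sum>C<K. \<Sum>B<K. - (M $$ (B, C) * (ebasis B \<and>\<^sub>e ebasis C) S))"
    by (intro sum.cong refl) (subst ebasis_wedge_ebasis_swap, simp)
  also have "\<dots> = - form2 M S"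
    using assms by (subst sum.swap) (simp add: form2_def sum_negf)
  finally show ?thesis .
qed

lemma form2_add:
  "dim_row N = dim_row M \<Longrightarrow> dim_col N = dim_col M \<Longrightarrow> form2 (M + N) S = form2 M S + form2 N S"
  by (simp add: form2_def distrib_right sum.distrib)

lemma form2_diff:
  "dim_row N = dim_row M \<Longrightarrow> dim_col N = dim_col M \<Longrightarrow> form2 (M - N) S = form2 M S - form2 N S"
  by (simp add: form2_def left_diff_distrib sum_subtractf)

lemma form2_uminus: "form2 (- M) S = - form2 M S"
  by (simp add: form2_def sum_negf)

lemma wedge_form1_form1:
  "(form1 v \<and>\<^sub>e form1 w) S = (\<Sum>B<dim_vec v. \<Sum>C<dim_vec w. v $ B * w $ C * (ebasis B \<and>\<^sub>e ebasis C) S)"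
  unfolding form1_def wedge_sum_left wedge_scale_left wedge_sum_right wedge_scale_right
  by (simp add: sum_distrib_left mult.assoc)

lemma ebasis_wedge_form1: "(ebasis B \<and>\<^sub>e form1 v) S = (\<Sum>C<dim_vec v. v $ C * (ebasis B \<and>\<^sub>e ebasis C) S)"
  unfolding form1_def wedge_sum_right wedge_scale_right ..

lemma form2_transpose_mult:
  assumes X: "X \<in> carrier_mat K K" and Y: "Y \<in> carrier_mat K K"
  shows "form2 (transpose_mat X * Y) S
    = (\<Sum>A<K. \<Sum>B<K. \<Sum>C<K. X $$ (A, B) * Y $$ (A, C) * (ebasis B \<and>\<^sub>e ebasis C) S)"
proof -
  have entry: "(transpose_mat X * Y) $$ (B, C) = (\<Sum>A<K. X $$ (A, B) * Y $$ (A, C))"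
    if "B < K" "C < K" for B C
    using X Y that by (subst index_mult_mat_sum[where L = K]) auto
  have "form2 (transpose_mat X * Y) S
      = (\<Sum>B<K. \<Sum>C<K. \<Sum>A<K. X $$ (A, B) * Y $$ (A, C) * (ebasis B \<and>\<^sub>e ebasis C) S)"
    using X Y unfolding form2_def
    by (simp add: sum_distrib_right entry del: index_mult_mat(1))
  also have "\<dots> = (\<Sum>A<K. \<Sum>B<K. \<Sum>C<K. X $$ (A, B) * Y $$ (A, C) * (ebasis B \<and>\<^sub>e ebasis C) S)"
    by (rule sum_rotate3[symmetric])
  finally show ?thesis .
qed

lemma sum_form1_rows:
  assumes "P \<in> carrier_mat K L" "H \<in> carrier_mat K K" "A < K"
  shows "(\<Sum>A'<K. H $$ (A', A) * form1 (row P A') S) = form1 (row (transpose_mat H * P) A) S"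
proof -
  have "(\<Sum>A'<K. H $$ (A', A) * form1 (row P A') S) = (\<Sum>A'<K. \<Sum>C<L. H $$ (A', A) * P $$ (A', C) * ebasis C S)"
    using assms by (simp add: form1_def sum_distrib_left mult.assoc)
  also have "\<dots> = (\<Sum>C<L. \<Sum>A'<K. H $$ (A', A) * P $$ (A', C) * ebasis C S)"
    by (rule sum.swap)
  also have "\<dots> = form1 (row (transpose_mat H * P) A) S"
    using assms by (simp add: form1_def scalar_prod_def atLeast0LessThan sum_distrib_right)
  finally show ?thesis .
qed

lemma sum_wedge_form1_rows:
  assumes P: "P \<in> carrier_mat K K" and Q: "Q \<in> carrier_mat K K" and H: "H \<in> carrier_mat K K"
  shows "(\<Sum>A<K. \<Sum>B<K. H $$ (A, B) * (form1 (row P A) \<and>\<^sub>e form1 (row Q B)) S)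
    = form2 (transpose_mat P * (H * Q)) S"
proof -
  have "(\<Sum>B<K. H $$ (A, B) * (form1 (row P A) \<and>\<^sub>e form1 (row Q B)) S)
      = (form1 (row P A) \<and>\<^sub>e form1 (row (H * Q) A)) S" if "A < K" for A
  proof -
    have "form1 (row (H * Q) A) = (\<lambda>T. \<Sum>B<K. H $$ (A, B) * form1 (row Q B) T)"
      using sum_form1_rows[of Q K K "transpose_mat H" A] that Q H by (simp add: fun_eq_iff)
    then show ?thesis
      by (simp add: wedge_sum_right wedge_scale_right)
  qed
  then have "(\<Sum>A<K. \<Sum>B<K. H $$ (A, B) * (form1 (row P A) \<and>\<^sub>e form1 (row Q B)) S)
      = (\<Sum>A<K. (form1 (row P A) \<and>\<^sub>e form1 (row (H * Q) A)) S)"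
    by simp
  also have "\<dots> = form2 (transpose_mat P * (H * Q)) S"
    using P Q H by (simp add: wedge_form1_form1 form2_transpose_mult[of _ K] mult.assoc)
  finally show ?thesis .
qed

lemma has_real_derivative_form2:
  assumes "\<And>t. M t \<in> carrier_mat K K" "M' \<in> carrier_mat K K"
    and "\<And>B C. B < K \<Longrightarrow> C < K \<Longrightarrow> ((\<lambda>t. M t $$ (B, C)) has_real_derivative M' $$ (B, C)) (at x)"
  shows "((\<lambda>t. form2 (M t) S) has_real_derivative form2 M' S) (at x)"
proof -
  have "dim_row (M t) = K" "dim_col (M t) = K" for t
    using assms(1)[of t] by auto
  with assms(2,3) show ?thesis
    unfolding form2_def by (auto intro!: DERIV_sum DERIV_cmult_right)
qed

section \<open>Frame matrices and the inverse metric\<close>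

definition coeff_mat :: "nat \<Rightarrow> (nat \<Rightarrow> nat \<Rightarrow> real) \<Rightarrow> real mat" where
  "coeff_mat K X = mat K K (\<lambda>(A, B). X A B)"

lemma coeff_mat_carrier [simp]: "coeff_mat K X \<in> carrier_mat K K"
  by (simp add: coeff_mat_def)

lemma dim_coeff_mat [simp]: "dim_row (coeff_mat K X) = K" "dim_col (coeff_mat K X) = K"
  by (simp_all add: coeff_mat_def)

lemma index_coeff_mat [simp]: "A < K \<Longrightarrow> B < K \<Longrightarrow> coeff_mat K X $$ (A, B) = X A B"
  by (simp add: coeff_mat_def)

lemma mult_coeff_mat_eq_one_iff:
  "coeff_mat K X * coeff_mat K Y = 1\<^sub>m K \<longleftrightarrow>
     (\<forall>A<K. \<forall>C<K. (\<Sum>B<K. X A B * Y B C) = (if A = C then 1 else 0))"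
proof -
  have entry: "(coeff_mat K X * coeff_mat K Y) $$ (A, C) = (\<Sum>B<K. X A B * Y B C)"
    if "A < K" "C < K" for A C
    using that by (subst index_mult_mat_sum[where L = K]) auto
  show ?thesis
    by (auto simp: mat_eq_iff entry simp del: index_mult_mat(1))
qed

lemma minv_eq_The:
  "minv K X = (THE g. coeff_mat K g * coeff_mat K X = 1\<^sub>m K \<and> coeff_mat K X * coeff_mat K g = 1\<^sub>m K
      \<and> (\<forall>A B. A \<ge> K \<or> B \<ge> K \<longrightarrow> g A B = 0))"
  by (simp only: minv_def mult_coeff_mat_eq_one_iff)

lemma minv_cong:
  assumes "\<And>A B. A < K \<Longrightarrow> B < K \<Longrightarrow> X A B = Y A B"
  shows "minv K X = minv K Y"
proof -
  have "coeff_mat K X = coeff_mat K Y"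
    using assms by (auto simp: coeff_mat_def)
  then show ?thesis
    by (simp only: minv_eq_The)
qed

lemma det_coeff_mat_nonzero:
  fixes X :: "nat \<Rightarrow> nat \<Rightarrow> real"
  assumes nondeg: "\<forall>v. (\<forall>B<K. (\<Sum>A<K. v A * X A B) = 0) \<longrightarrow> (\<forall>A<K. v A = 0)"
  shows "det (coeff_mat K X) \<noteq> 0"
proof
  assume "det (coeff_mat K X) = 0"
  then have "det (transpose_mat (coeff_mat K X)) = 0"
    by (simp add: det_transpose[OF coeff_mat_carrier])
  then obtain v where v: "v \<in> carrier_vec K" "v \<noteq> 0\<^sub>v K" "transpose_mat (coeff_mat K X) *\<^sub>v v = 0\<^sub>v K"
    using det_0_iff_vec_prod_zero_field[of "transpose_mat (coeff_mat K X)" K] by auto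
  have "(\<Sum>A<K. v $ A * X A B) = 0" if "B < K" for B
  proof -
    have "(transpose_mat (coeff_mat K X) *\<^sub>v v) $ B = 0"
      using v(3) that by simp
    then show ?thesis
      using v(1) that by (simp add: scalar_prod_def atLeast0LessThan mult.commute)
  qed
  then have "\<forall>A<K. v $ A = 0"
    using nondeg[rule_format, of "\<lambda>A. v $ A"] by blast
  with v(1,2) show False
    by (auto simp: vec_eq_iff)
qed

lemma minv_inverse:
  fixes X :: "nat \<Rightarrow> nat \<Rightarrow> real"
  assumes "\<forall>v. (\<forall>B<K. (\<Sum>A<K. v A * X A B) = 0) \<longrightarrow> (\<forall>A<K. v A = 0)"
  shows "coeff_mat K (minv K X) * coeff_mat K X = 1\<^sub>m K"
    and "coeff_mat K X * coeff_mat K (minv K X) = 1\<^sub>m K"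
proof -
  let ?M = "coeff_mat K X"
  let ?P = "\<lambda>g. coeff_mat K g * ?M = 1\<^sub>m K \<and> ?M * coeff_mat K g = 1\<^sub>m K
      \<and> (\<forall>A B. A \<ge> K \<or> B \<ge> K \<longrightarrow> g A B = 0)"
  have "?M \<in> Units (ring_mat TYPE(real) K ())"
    using det_non_zero_imp_unit[OF coeff_mat_carrier det_coeff_mat_nonzero[OF assms]] .
  then obtain N where N: "N \<in> carrier_mat K K" "N * ?M = 1\<^sub>m K" "?M * N = 1\<^sub>m K"
    by (auto simp: Units_def ring_mat_def)
  define g where "g A B = (if A < K \<and> B < K then N $$ (A, B) else 0)" for A B
  have coeff_g: "coeff_mat K g = N"
    using N(1) by (auto simp: g_def coeff_mat_def)
  have "?P g"
    using N by (simp add: coeff_g g_def)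
  moreover have "g' = g" if "?P g'" for g'
  proof -
    have "coeff_mat K g' = coeff_mat K g' * (?M * N)"
      using N(3) by simp
    also have "\<dots> = N"
      using that N(1) by (simp flip: assoc_mult_mat[OF coeff_mat_carrier coeff_mat_carrier N(1)])
    finally have "coeff_mat K g' = coeff_mat K g"
      by (simp add: coeff_g)
    then show "g' = g"
      using that by (auto simp: fun_eq_iff g_def coeff_mat_def mat_eq_iff)
  qed
  ultimately have "minv K X = g"
    unfolding minv_eq_The by (rule the_equality)
  with N show "coeff_mat K (minv K X) * ?M = 1\<^sub>m K" "?M * coeff_mat K (minv K X) = 1\<^sub>m K"
    by (simp_all add: coeff_g)
qed

section \<open>Connection and curvature in the frame\<close>

lemma conn_der_escal: "conn_der K Gam q i (escal c) = (\<lambda>_. 0)"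
  by (simp add: conn_der_def eint_escal wedge_def fun_eq_iff)

lemma conn_der_diff_scale:
  "conn_der K Gam q i (\<lambda>S. a S - c * b S) S = conn_der K Gam q i a S - c * conn_der K Gam q i b S"
  unfolding conn_der_def eint_diff eint_scale
  by (simp add: wedge_diff_right wedge_scale_right right_diff_distrib sum_subtractf sum_distrib_left mult_ac)

lemma conn_der_ebasis:
  assumes "A < K"
  shows "conn_der K Gam q i (ebasis A) = form1 (row (coeff_mat K (Gam q i)) A)"
proof
  fix S
  have "conn_der K Gam q i (ebasis A) S = (\<Sum>A'<K. \<Sum>B<K. if A' = A then Gam q i A B * ebasis B S else 0)"
    by (simp add: conn_der_def eint_ebasis ebasis_wedge_escal
        if_distrib[of "\<lambda>x. x * _"] if_distrib[of "\<lambda>x. _ * x"] cong: if_cong)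
  also have "\<dots> = form1 (row (coeff_mat K (Gam q i)) A) S"
    using assms by (subst sum.swap) (simp add: form1_def)
  finally show "conn_der K Gam q i (ebasis A) S = form1 (row (coeff_mat K (Gam q i)) A) S" .
qed

lemma conn_der_form1:
  assumes "v \<in> carrier_vec K"
  shows "conn_der K Gam q i (form1 v) = form1 (transpose_mat (coeff_mat K (Gam q i)) *\<^sub>v v)"
proof
  fix S
  have "conn_der K Gam q i (form1 v) S = (\<Sum>A<K. \<Sum>B<K. v $ A * Gam q i A B * ebasis B S)"
    using assms by (simp add: conn_der_def eint_form1 ebasis_wedge_escal mult_ac)
  also have "\<dots> = form1 (transpose_mat (coeff_mat K (Gam q i)) *\<^sub>v v) S"
    using assms by (subst sum.swap)
      (simp add: form1_def scalar_prod_def atLeast0LessThan sum_distrib_left mult_ac)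
  finally show "conn_der K Gam q i (form1 v) S = form1 (transpose_mat (coeff_mat K (Gam q i)) *\<^sub>v v) S" .
qed

lemma conn_der_form2:
  assumes M: "M \<in> carrier_mat K K"
  shows "conn_der K Gam q i (form2 M) S
    = form2 (transpose_mat (coeff_mat K (Gam q i)) * (M - transpose_mat M)) S"
proof -
  let ?\<Gamma> = "coeff_mat K (Gam q i)" and ?N = "M - transpose_mat M"
  let ?F = "\<lambda>A B C. ?\<Gamma> $$ (A, B) * ?N $$ (A, C) * (ebasis B \<and>\<^sub>e ebasis C) S"
  have entry: "(transpose_mat ?\<Gamma> * ?N) $$ (B, C) = (\<Sum>A<K. ?\<Gamma> $$ (A, B) * ?N $$ (A, C))"
    if "B < K" "C < K" for B C
    using M that by (subst index_mult_mat_sum[where L = K]) auto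
  have "conn_der K Gam q i (form2 M) S = (\<Sum>A<K. \<Sum>B<K. \<Sum>C<K. ?F A B C)"
    using M by (simp add: conn_der_def eint_form2 ebasis_wedge_form1 sum_distrib_left mult.assoc)
  also have "\<dots> = (\<Sum>B<K. \<Sum>C<K. \<Sum>A<K. ?F A B C)"
    by (rule sum_rotate3)
  also have "\<dots> = form2 (transpose_mat ?\<Gamma> * ?N) S"
    using M unfolding form2_def
    by (simp add: sum_distrib_right entry del: index_mult_mat(1))
  finally show ?thesis .
qed

definition conn_deriv_mat ::
    "nat \<Rightarrow> ((real^'n::finite) \<Rightarrow> 'n \<Rightarrow> nat \<Rightarrow> nat \<Rightarrow> real) \<Rightarrow> real^'n \<Rightarrow> 'n \<Rightarrow> 'n \<Rightarrow> real mat"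
  where "conn_deriv_mat K Gam q k i = coeff_mat K (\<lambda>A C. deriv (\<lambda>t. Gam (q + t *\<^sub>R axis k 1) i A C) 0)"

lemma nablaq_frame:
  assumes "A < K"
  shows "nablaq K Gam (pb (\<lambda>_. ebasis A)) j = (\<lambda>(q, p). form1 (row (coeff_mat K (Gam q j)) A))"
  using assms by (auto simp: fun_eq_iff nablaq_def dq_def pb_def conn_der_ebasis)

lemma nablaq_nablaq_frame:
  assumes A: "A < K" and C: "C < K"
  shows "nablaq K Gam (nablaq K Gam (pb (\<lambda>_. ebasis A)) j) i (q, p) {C}
    = (conn_deriv_mat K Gam q i j + coeff_mat K (Gam q j) * coeff_mat K (Gam q i)) $$ (A, C)"
proof -
  let ?Du = "\<lambda>(q, p). form1 (row (coeff_mat K (Gam q j)) A)"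
  have "dq ?Du i (q, p) {C} = conn_deriv_mat K Gam q i j $$ (A, C)"
    using A C by (simp add: dq_def form1_singleton conn_deriv_mat_def)
  moreover have "conn_der K Gam q i (?Du (q, p)) {C}
      = (coeff_mat K (Gam q j) * coeff_mat K (Gam q i)) $$ (A, C)"
    using A C by (simp add: conn_der_form1 form1_singleton scalar_prod_def atLeast0LessThan mult.commute)
  ultimately show ?thesis
    using A C unfolding nablaq_frame[OF A] by (simp add: nablaq_def)
qed

definition curv_mat :: "nat \<Rightarrow> ((real^'n::finite) \<Rightarrow> 'n \<Rightarrow> nat \<Rightarrow> nat \<Rightarrow> real) \<Rightarrow> real^'n \<Rightarrow> 'n \<Rightarrow> 'n \<Rightarrow> real mat"
  where "curv_mat K Gam q i j = coeff_mat K (\<lambda>A C. curv K Gam q C A i j)"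

lemma curv_mat_eq:
  "curv_mat K Gam q i j = conn_deriv_mat K Gam q i j + coeff_mat K (Gam q j) * coeff_mat K (Gam q i)
     - conn_deriv_mat K Gam q j i - coeff_mat K (Gam q i) * coeff_mat K (Gam q j)"
  by (rule eq_matI)
     (simp_all add: curv_mat_def curv_def nablaq_nablaq_frame conn_deriv_mat_def)

section \<open>Local form of the bracket\<close>

definition metric_pairing :: "nat \<Rightarrow> (nat \<Rightarrow> nat \<Rightarrow> real) \<Rightarrow> ext \<Rightarrow> ext \<Rightarrow> ext" where
  "metric_pairing K H a b = (\<lambda>S. \<Sum>A<K. \<Sum>B<K. H A B * (ejnt A a \<and>\<^sub>e eint B b) S)"

definition curv_form :: "nat \<Rightarrow> ((real^'n::finite) \<Rightarrow> nat \<Rightarrow> nat \<Rightarrow> real)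
    \<Rightarrow> ((real^'n) \<Rightarrow> 'n \<Rightarrow> nat \<Rightarrow> nat \<Rightarrow> real) \<Rightarrow> real^'n \<Rightarrow> 'n \<Rightarrow> 'n \<Rightarrow> ext"
  where "curv_form K h Gam q i j = form2 (transpose_mat (coeff_mat K (minv K (h q))) * curv_mat K Gam q i j)"

lemma curv_form_eq_sum:
  "curv_form K h Gam q i j = (\<lambda>S. \<Sum>A<K. \<Sum>B<K. \<Sum>C<K.
     minv K (h q) A B * curv K Gam q C A i j * (ebasis B \<and>\<^sub>e ebasis C) S)"
  by (simp add: fun_eq_iff curv_form_def curv_mat_def form2_transpose_mult[OF coeff_mat_carrier coeff_mat_carrier])

lemma rothstein_scalar_momenta:
  assumes dp_\<phi>: "\<And>k. dp \<phi> k (q, p) = escal (a k)" and dp_\<psi>: "\<And>k. dp \<psi> k (q, p) = escal (b k)"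
    and "finite S"
  shows "rothstein K h Gam \<phi> \<psi> (q, p) S =
      (\<Sum>k\<in>UNIV. b k * nablaq K Gam \<phi> k (q, p) S) - (\<Sum>k\<in>UNIV. a k * nablaq K Gam \<psi> k (q, p) S)
      - 1/2 * (\<Sum>k\<in>UNIV. \<Sum>l\<in>UNIV. a k * b l * curv_form K h Gam q k l S)
      + metric_pairing K (h q) (\<phi> (q, p)) (\<psi> (q, p)) S"
proof -
  have "rothstein K h Gam \<phi> \<psi> (q, p) S =
      (\<Sum>k\<in>UNIV. (nablaq K Gam \<phi> k (q, p) \<and>\<^sub>e escal (b k)) S)
      - (\<Sum>k\<in>UNIV. (escal (a k) \<and>\<^sub>e nablaq K Gam \<psi> k (q, p)) S)
      - 1/2 * (\<Sum>k\<in>UNIV. \<Sum>l\<in>UNIV. ((curv_form K h Gam q k l \<and>\<^sub>e escal (a k)) \<and>\<^sub>e escal (b l)) S)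
      + metric_pairing K (h q) (\<phi> (q, p)) (\<psi> (q, p)) S"
    unfolding rothstein_def esum_def curv_form_eq_sum metric_pairing_def by (simp add: dp_\<phi> dp_\<psi>)
  with \<open>finite S\<close> show ?thesis
    by (simp add: wedge_escal escal_wedge mult_ac)
qed

lemma rothstein_eq_escalI:
  assumes "\<And>S. finite S \<Longrightarrow> rothstein K h Gam \<phi> \<psi> x S = escal c S"
  shows "rothstein K h Gam \<phi> \<psi> x = escal c"
proof
  fix S
  show "rothstein K h Gam \<phi> \<psi> x S = escal c S"
  proof (cases "finite S")
    case False
    then have "S \<noteq> {}"
      by auto
    with False show ?thesis
      by (cases x) (simp add: rothstein_def esum_def wedge_infinite escal_def)
  qed (rule assms)
qed

section \<open>Brackets of the coordinate functions\<close>

lemma rfun_eq: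
  "rfun K h Gam i (q, p) = (\<lambda>S. escal (p $ i) S
     - 1/2 * form2 (transpose_mat (coeff_mat K (minv K (h q))) * coeff_mat K (Gam q i)) S)"
  by (simp add: fun_eq_iff rfun_def pfun_def pb_def esum_def
      form2_transpose_mult[OF coeff_mat_carrier coeff_mat_carrier])

lemma deriv_escal_axis_component:
  "deriv (\<lambda>t. escal ((x + t *\<^sub>R axis k 1) $ j) S - c) 0 = escal (if j = k then 1 else 0) S"
  by (cases "S = {}")
     (auto simp: escal_def axis_def intro!: DERIV_imp_deriv derivative_eq_intros)

lemma pb_apply: "pb s (q, p) = s q"
  by (simp add: pb_def)

lemma qfun_apply: "qfun i (q, p) = escal (q $ i)"
  by (simp add: qfun_def)

lemma dp_qfun: "dp (qfun i) k x = escal 0"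
  by (cases x) (simp add: dp_def qfun_def escal_0 fun_eq_iff)

lemma dp_pb: "dp (pb s) k x = escal 0"
  by (cases x) (simp add: dp_def pb_def escal_0 fun_eq_iff)

lemma dp_rfun: "dp (rfun K h Gam j) k (q, p) = escal (if j = k then 1 else 0)"
  unfolding dp_def by (simp only: case_prod_conv rfun_eq deriv_escal_axis_component)

lemma nablaq_qfun: "nablaq K Gam (qfun i) k (q, p) = escal (if i = k then 1 else 0)"
  using deriv_escal_axis_component[of q k i _ 0]
  by (simp add: nablaq_def dq_def qfun_def conn_der_escal fun_eq_iff)

lemma metric_pairing_escal_left: "metric_pairing K H (escal c) b = (\<lambda>_. 0)"
  by (simp add: metric_pairing_def ejnt_escal wedge_def)

lemma metric_pairing_ebasis:
  assumes "A < K" "B < K" "finite S"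
  shows "metric_pairing K H (ebasis A) (ebasis B) S = escal (H A B) S"
  using assms by (simp add: metric_pairing_def ejnt_ebasis eint_ebasis escal_wedge)
    (simp add: escal_def if_distrib[of "\<lambda>x. _ * x"] cong: if_cong)

lemma rothstein_qfun_rfun:
  "rothstein K h Gam (qfun i) (rfun K h Gam j) (q, p) = escal (if i = j then 1 else 0)"
proof (rule rothstein_eq_escalI)
  fix S :: "nat set"
  assume "finite S"
  then show "rothstein K h Gam (qfun i) (rfun K h Gam j) (q, p) S = escal (if i = j then 1 else 0) S"
    by (simp add: rothstein_scalar_momenta[where a = "\<lambda>_. 0" and b = "\<lambda>k. if j = k then 1 else 0"]
        dp_qfun dp_rfun nablaq_qfun qfun_apply metric_pairing_escal_left)
      (simp add: escal_def if_distrib[of "\<lambda>x. _ * x"] cong: if_cong)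
qed

lemma rothstein_frame_frame:
  assumes "A < K" "B < K"
  shows "rothstein K h Gam (pb (\<lambda>_. ebasis A)) (pb (\<lambda>_. ebasis B)) (q, p) = escal (h q A B)"
proof (rule rothstein_eq_escalI)
  fix S :: "nat set"
  assume "finite S"
  with assms show "rothstein K h Gam (pb (\<lambda>_. ebasis A)) (pb (\<lambda>_. ebasis B)) (q, p) S = escal (h q A B) S"
    by (simp add: rothstein_scalar_momenta[where a = "\<lambda>_. 0" and b = "\<lambda>_. 0"] dp_pb pb_apply metric_pairing_ebasis)
qed

lemma rothstein_qfun_qfun: "rothstein K h Gam (qfun i) (qfun j) (q, p) = escal 0"
  by (rule rothstein_eq_escalI)
     (simp add: rothstein_scalar_momenta[where a = "\<lambda>_. 0" and b = "\<lambda>_. 0"] dp_qfun qfun_apply metric_pairing_escal_left escal_0)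

lemma rothstein_qfun_frame: "rothstein K h Gam (qfun i) (pb (\<lambda>_. ebasis A)) (q, p) = escal 0"
  by (rule rothstein_eq_escalI)
     (simp add: rothstein_scalar_momenta[where a = "\<lambda>_. 0" and b = "\<lambda>_. 0"] dp_qfun dp_pb qfun_apply metric_pairing_escal_left escal_0)

section \<open>Frames with constant metric coefficients\<close>

locale constant_frame =
  fixes U :: "(real^'n::finite) set" and K :: nat
    and h :: "(real^'n) \<Rightarrow> nat \<Rightarrow> nat \<Rightarrow> real"
    and Gam :: "(real^'n) \<Rightarrow> 'n \<Rightarrow> nat \<Rightarrow> nat \<Rightarrow> real"
    and q :: "real^'n"
  assumes open_U: "open U"
    and fiber_metric: "fiber_metric U K h"
    and metric_connection: "metric_connection U K h Gam"
    and h_const: "\<forall>A<K. \<forall>B<K. \<exists>c. \<forall>q\<in>U. h q A B = c"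
    and q_in_U: "q \<in> U"
begin

text \<open>
  At the point q: H = (h_AB), G = (h^AB), the entry (A, C) of \<Gamma> i is Gamma^C_iA and that of
  D\<Gamma> k i its derivative in direction x^k; r_i is p_i minus half the 2-form of \<omega> i.
\<close>

abbreviation H where "H \<equiv> coeff_mat K (h q)"

abbreviation G where "G \<equiv> coeff_mat K (minv K (h q))"

abbreviation \<Gamma> where "\<Gamma> i \<equiv> coeff_mat K (Gam q i)"

abbreviation D\<Gamma> where "D\<Gamma> k i \<equiv> conn_deriv_mat K Gam q k i"

abbreviation \<omega> where "\<omega> i \<equiv> G * \<Gamma> i"

text \<open>Instances at dimension K, so that simp can discharge their carrier premises.\<close>

lemmas mult_carrier_mat_K [simp] = mult_carrier_mat[of _ K K _ K]

lemmas assoc_mult_mat_K [simp] = assoc_mult_mat[of _ K K _ K _ K]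

lemmas transpose_mult_K [simp] = transpose_mult[of _ K K _ K]

lemmas index_mult_mat_K = index_mult_mat_sum[of _ K K _ K]

lemma eventually_line_in_U: "\<forall>\<^sub>F t in nhds 0. q + t *\<^sub>R axis k 1 \<in> U"
proof -
  have "open ((\<lambda>t::real. q + t *\<^sub>R axis k 1) -` U)"
    by (rule continuous_open_vimage[OF open_U]) (intro continuous_intros)
  with q_in_U show ?thesis
    unfolding eventually_nhds by force
qed

lemma h_eq_on_U: "q' \<in> U \<Longrightarrow> A < K \<Longrightarrow> B < K \<Longrightarrow> h q' A B = h q A B"
  using h_const q_in_U by metis

lemma h_nondegenerate: "\<forall>v. (\<forall>B<K. (\<Sum>A<K. v A * h q A B) = 0) \<longrightarrow> (\<forall>A<K. v A = 0)"
  using fiber_metric q_in_U unfolding fiber_metric_def by blast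

lemma G_H: "G * H = 1\<^sub>m K" and H_G: "H * G = 1\<^sub>m K"
  using minv_inverse[OF h_nondegenerate] by simp_all

lemma G_H_mult: "X \<in> carrier_mat K K \<Longrightarrow> G * (H * X) = X"
  by (simp flip: assoc_mult_mat_K add: G_H)

lemma H_G_mult: "X \<in> carrier_mat K K \<Longrightarrow> H * (G * X) = X"
  by (simp flip: assoc_mult_mat_K add: H_G)

lemma transpose_H: "transpose_mat H = H"
  using fiber_metric q_in_U by (auto simp: fiber_metric_def intro!: eq_matI)

lemma transpose_G: "transpose_mat G = G"
proof -
  have "transpose_mat G = transpose_mat G * (H * G)"
    by (simp add: H_G)
  also have "\<dots> = transpose_mat (H * G) * G"
    by (simp add: transpose_H)
  finally show ?thesis
    by (simp add: H_G)
qed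

lemma metric_compatibility:
  assumes "A < K" "B < K"
  shows "(\<Sum>C<K. Gam q i A C * h q C B + Gam q i B C * h q A C) = 0"
proof -
  have deriv_h: "((\<lambda>t. h (q + t *\<^sub>R axis i 1) A B) has_real_derivative
      (\<Sum>C<K. Gam q i A C * h q C B + Gam q i B C * h q A C)) (at 0)"
    using metric_connection q_in_U assms unfolding metric_connection_def by blast
  have h_locally_const: "\<forall>\<^sub>F t in nhds 0. h (q + t *\<^sub>R axis i 1) A B = h q A B"
    using eventually_line_in_U[of i] by eventually_elim (simp add: h_eq_on_U assms)
  have "((\<lambda>t. h q A B) has_real_derivative
      (\<Sum>C<K. Gam q i A C * h q C B + Gam q i B C * h q A C)) (at 0)"
    using DERIV_cong_ev[OF refl h_locally_const refl] deriv_h by simp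
  then show ?thesis
    using DERIV_const DERIV_unique by blast
qed

lemma \<Gamma>_H: "\<Gamma> i * H = - (H * transpose_mat (\<Gamma> i))"
proof (rule eq_matI)
  fix A B assume "A < dim_row (- (H * transpose_mat (\<Gamma> i)))" "B < dim_col (- (H * transpose_mat (\<Gamma> i)))"
  then have AB: "A < K" "B < K"
    by simp_all
  have "(\<Gamma> i * H) $$ (A, B) = (\<Sum>C<K. Gam q i A C * h q C B)"
    using AB by (simp add: index_mult_mat_K del: index_mult_mat(1))
  moreover have "(H * transpose_mat (\<Gamma> i)) $$ (A, B) = (\<Sum>C<K. Gam q i B C * h q A C)"
    using AB by (simp add: index_mult_mat_K mult.commute del: index_mult_mat(1))
  ultimately show "(\<Gamma> i * H) $$ (A, B) = (- (H * transpose_mat (\<Gamma> i))) $$ (A, B)"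
    using metric_compatibility[OF AB, of i] AB by (simp add: sum.distrib eq_neg_iff_add_eq_0)
qed auto

lemma transpose_\<Gamma>_G: "transpose_mat (\<Gamma> i) * G = - (\<omega> i)"
proof -
  have "- (\<omega> i) = - (G * (\<Gamma> i * H) * G)"
    by (simp add: H_G)
  also have "\<dots> = G * (H * (transpose_mat (\<Gamma> i) * G))"
    by (simp add: \<Gamma>_H)
  also have "\<dots> = transpose_mat (\<Gamma> i) * G"
    by (simp add: G_H_mult)
  finally show ?thesis
    by simp
qed

lemma conn_form_antisymmetric: "transpose_mat (\<omega> i) = - \<omega> i"
  by (simp add: transpose_G transpose_\<Gamma>_G)

lemma transpose_\<Gamma>_conn_form: "transpose_mat (\<Gamma> j) * \<omega> i = - (\<omega> j * \<Gamma> i)"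
  by (simp flip: assoc_mult_mat_K add: transpose_\<Gamma>_G)

lemma conn_form_H_conn_form:
  "transpose_mat (\<omega> i) * (H * \<omega> j) = - (\<omega> i * \<Gamma> j)"
  by (simp add: conn_form_antisymmetric H_G_mult)

lemma H_conn_form: "transpose_mat H * \<omega> i = \<Gamma> i"
  by (simp add: transpose_H H_G_mult)

lemma transpose_conn_form_\<Gamma>: "transpose_mat (\<omega> i * \<Gamma> j) = \<omega> j * \<Gamma> i"
proof -
  have "transpose_mat (\<omega> i * \<Gamma> j) = transpose_mat (\<Gamma> j) * (transpose_mat (\<Gamma> i) * G)"
    by (simp add: transpose_G)
  also have "\<dots> = \<omega> j * \<Gamma> i"
    by (simp add: transpose_\<Gamma>_G flip: assoc_mult_mat_K)
  finally show ?thesis .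
qed

lemma rfun_on_U:
  "q' \<in> U \<Longrightarrow> rfun K h Gam i (q', p) = (\<lambda>S. escal (p $ i) S - 1/2 * form2 (G * coeff_mat K (Gam q' i)) S)"
  using minv_cong[of K "h q'" "h q"] by (simp add: rfun_eq h_eq_on_U transpose_G)

lemma Gam_has_derivative:
  assumes "A < K" "C < K"
  shows "((\<lambda>t. Gam (q + t *\<^sub>R axis k 1) i A C) has_real_derivative
    deriv (\<lambda>t. Gam (q + t *\<^sub>R axis k 1) i A C) 0) (at 0)"
proof -
  have "smooth_on U (\<lambda>q. Gam q i A C)"
    using metric_connection assms unfolding metric_connection_def by blast
  then have "(\<lambda>t. iter_pdiff [] (\<lambda>q. Gam q i A C) (q + t *\<^sub>R axis k 1)) differentiable (at 0)"
    using q_in_U unfolding smooth_on_def by blast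
  then have "(\<lambda>t. Gam (q + t *\<^sub>R axis k 1) i A C) differentiable (at 0)"
    by (simp add: iter_pdiff_def)
  then show ?thesis
    by (simp add: DERIV_deriv_iff_real_differentiable)
qed

lemma dq_rfun: "dq (rfun K h Gam i) j (q, p) S = - 1/2 * form2 (G * D\<Gamma> j i) S"
proof -
  let ?M = "\<lambda>t. G * coeff_mat K (Gam (q + t *\<^sub>R axis j 1) i)"
  have rfun_near_q: "\<forall>\<^sub>F t in nhds 0.
      rfun K h Gam i (q + t *\<^sub>R axis j 1, p) S = escal (p $ i) S - 1/2 * form2 (?M t) S"
    using eventually_line_in_U[of j] by eventually_elim (simp add: rfun_on_U)
  have "((\<lambda>t. form2 (?M t) S) has_real_derivative form2 (G * D\<Gamma> j i) S) (at 0)"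
  proof (rule has_real_derivative_form2)
    fix B C assume "B < K" "C < K"
    then show "((\<lambda>t. ?M t $$ (B, C)) has_real_derivative (G * D\<Gamma> j i) $$ (B, C)) (at 0)"
      by (simp add: index_mult_mat_K conn_deriv_mat_def del: index_mult_mat(1))
        (auto intro!: DERIV_sum DERIV_cmult Gam_has_derivative)
  qed (auto simp: conn_deriv_mat_def)
  then have "((\<lambda>t. escal (p $ i) S - 1/2 * form2 (?M t) S) has_real_derivative
      0 - 1/2 * form2 (G * D\<Gamma> j i) S) (at 0)"
    by (intro DERIV_diff DERIV_const DERIV_cmult)
  then show ?thesis
    unfolding dq_def using DERIV_cong_ev[OF refl rfun_near_q refl] by (simp add: DERIV_imp_deriv)
qed

lemma nablaq_rfun:
  "nablaq K Gam (rfun K h Gam i) j (q, p) S = form2 (\<omega> j * \<Gamma> i) S - 1/2 * form2 (G * D\<Gamma> j i) S"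
proof -
  have antisym_part: "form2 (transpose_mat (\<Gamma> j) * (\<omega> i - transpose_mat (\<omega> i))) S
      = - 2 * form2 (\<omega> j * \<Gamma> i) S"
    unfolding conn_form_antisymmetric
    by (simp add: mult_minus_distrib_mat[of _ K K _ K] form2_diff form2_uminus transpose_\<Gamma>_conn_form)
  have "conn_der K Gam q j (rfun K h Gam i (q, p)) S
      = conn_der K Gam q j (escal (p $ i)) S - 1/2 * conn_der K Gam q j (form2 (\<omega> i)) S"
    unfolding rfun_on_U[OF q_in_U] by (rule conn_der_diff_scale)
  also have "\<dots> = - 1/2 * form2 (transpose_mat (\<Gamma> j) * (\<omega> i - transpose_mat (\<omega> i))) S"
    by (simp only: conn_der_escal conn_der_form2[OF mult_carrier_mat_K[OF coeff_mat_carrier coeff_mat_carrier]])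
  also have "\<dots> = form2 (\<omega> j * \<Gamma> i) S"
    unfolding antisym_part by simp
  finally show ?thesis
    by (simp add: nablaq_def dq_rfun)
qed

lemma curv_form_at_q:
  "curv_form K h Gam q i j S = form2 (G * D\<Gamma> i j) S + form2 (\<omega> j * \<Gamma> i) S
     - form2 (G * D\<Gamma> j i) S - form2 (\<omega> i * \<Gamma> j) S"
  by (simp add: curv_form_def curv_mat_eq transpose_G conn_deriv_mat_def
      mult_add_distrib_mat[of _ K K _ K] mult_minus_distrib_mat[of _ K K _ K] minus_carrier_mat form2_add form2_diff)

lemma ejnt_rfun: "A < K \<Longrightarrow> ejnt A (rfun K h Gam i (q, p)) = form1 (row (\<omega> i) A)"
  unfolding rfun_on_U[OF q_in_U] ejnt_diff_scale
  by (simp add: ejnt_escal ejnt_form2[of _ K]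
      form1_row_minus_col[of _ K, OF _ conn_form_antisymmetric])

lemma eint_rfun: "A < K \<Longrightarrow> eint A (rfun K h Gam i (q, p)) = (\<lambda>S. - form1 (row (\<omega> i) A) S)"
  unfolding rfun_on_U[OF q_in_U] eint_diff eint_scale
  by (simp add: eint_escal eint_form2[of _ K]
      form1_row_minus_col[of _ K, OF _ conn_form_antisymmetric])

lemma metric_pairing_rfun_rfun:
  "metric_pairing K (h q) (rfun K h Gam i (q, p)) (rfun K h Gam j (q, p)) S = form2 (\<omega> i * \<Gamma> j) S"
proof -
  have "metric_pairing K (h q) (rfun K h Gam i (q, p)) (rfun K h Gam j (q, p)) S
      = - (\<Sum>A<K. \<Sum>B<K. H $$ (A, B) * (form1 (row (\<omega> i) A) \<and>\<^sub>e form1 (row (\<omega> j) B)) S)"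
    by (simp add: metric_pairing_def ejnt_rfun eint_rfun wedge_uminus_right sum_negf)
  also have "\<dots> = - form2 (transpose_mat (\<omega> i) * (H * \<omega> j)) S"
    by (subst sum_wedge_form1_rows[of _ K]) simp_all
  also have "\<dots> = form2 (\<omega> i * \<Gamma> j) S"
    by (simp only: conn_form_H_conn_form form2_uminus minus_minus)
  finally show ?thesis .
qed

lemma metric_pairing_rfun_frame:
  assumes "A < K" "finite S"
  shows "metric_pairing K (h q) (rfun K h Gam i (q, p)) (ebasis A) S = form1 (row (\<Gamma> i) A) S"
proof -
  have "metric_pairing K (h q) (rfun K h Gam i (q, p)) (ebasis A) S
      = (\<Sum>A'<K. H $$ (A', A) * form1 (row (\<omega> i) A') S)"
    using assms by (simp add: metric_pairing_def ejnt_rfun eint_ebasis wedge_escal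
        if_distrib[of "\<lambda>x. x * _"] if_distrib[of "\<lambda>x. _ * x"] cong: if_cong)
  also have "\<dots> = form1 (row (\<Gamma> i) A) S"
    using assms by (subst sum_form1_rows[of _ K K]) (simp_all add: H_conn_form)
  finally show ?thesis .
qed

lemma form2_conn_form_\<Gamma>_swap: "form2 (\<omega> j * \<Gamma> i) S = - form2 (\<omega> i * \<Gamma> j) S"
  using form2_transpose[of "\<omega> i * \<Gamma> j" K S] by (simp only: transpose_conn_form_\<Gamma>) simp

lemma rothstein_rfun_rfun: "rothstein K h Gam (rfun K h Gam i) (rfun K h Gam j) (q, p) = escal 0"
proof (rule rothstein_eq_escalI)
  fix S :: "nat set"
  assume "finite S"
  have if_sum: "(\<Sum>l\<in>UNIV. if P then f l else 0) = (if P then \<Sum>l\<in>UNIV. f l else 0)"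
    for P and f :: "'n \<Rightarrow> real"
    by simp
  from \<open>finite S\<close> have "rothstein K h Gam (rfun K h Gam i) (rfun K h Gam j) (q, p) S =
      nablaq K Gam (rfun K h Gam i) j (q, p) S - nablaq K Gam (rfun K h Gam j) i (q, p) S
      - 1/2 * curv_form K h Gam q i j S
      + metric_pairing K (h q) (rfun K h Gam i (q, p)) (rfun K h Gam j (q, p)) S"
    by (simp add: rothstein_scalar_momenta[where a = "\<lambda>k. if i = k then 1 else 0" and b = "\<lambda>k. if j = k then 1 else 0"]
        dp_rfun if_sum if_distrib[of "\<lambda>x. x * _"] cong: if_cong)
  also have "\<dots> = 1/2 * (form2 (\<omega> j * \<Gamma> i) S + form2 (\<omega> i * \<Gamma> j) S)"
  proof -
    have "x - 1/2 * u - (y - 1/2 * w) - 1/2 * (w + x - u - y) + y = 1/2 * (x + y)" for x y u w :: real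
      by (simp add: field_simps)
    then show ?thesis
      unfolding nablaq_rfun curv_form_at_q metric_pairing_rfun_rfun .
  qed
  also have "\<dots> = escal 0 S"
    unfolding form2_conn_form_\<Gamma>_swap[of j i] by (simp add: escal_0)
  finally show "rothstein K h Gam (rfun K h Gam i) (rfun K h Gam j) (q, p) S = escal 0 S" .
qed

lemma rothstein_rfun_frame:
  assumes "A < K"
  shows "rothstein K h Gam (rfun K h Gam i) (pb (\<lambda>_. ebasis A)) (q, p) = escal 0"
proof (rule rothstein_eq_escalI)
  fix S :: "nat set"
  assume "finite S"
  with assms show "rothstein K h Gam (rfun K h Gam i) (pb (\<lambda>_. ebasis A)) (q, p) S = escal 0 S"
    by (simp add: rothstein_scalar_momenta[where a = "\<lambda>k. if i = k then 1 else 0" and b = "\<lambda>_. 0"]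
        dp_rfun dp_pb pb_apply nablaq_frame metric_pairing_rfun_frame escal_0
        if_distrib[of "\<lambda>x. x * _"] cong: if_cong)
qed

end

theorem mainTheorem9:
  fixes U :: "(real^'n::finite) set" and K :: nat
    and h :: "(real^'n::finite) \<Rightarrow> nat \<Rightarrow> nat \<Rightarrow> real"
    and Gam :: "(real^'n::finite) \<Rightarrow> 'n \<Rightarrow> nat \<Rightarrow> nat \<Rightarrow> real"
  assumes "open U"
    and "fiber_metric U K h"
    and "metric_connection U K h Gam"
    and const: "\<forall>A<K. \<forall>B<K. \<exists>c. \<forall>q\<in>U. h q A B = c"
    and "q \<in> U"
  shows
    "(\<forall>i j. rothstein K h Gam (qfun i) (rfun K h Gam j) (q,p) = escal (if i = j then 1 else 0))
   \<and> (\<forall>A<K. \<forall>B<K. rothstein K h Gam (pb (\<lambda>_. ebasis A)) (pb (\<lambda>_. ebasis B)) (q,p) = escal (h q A B))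
   \<and> (\<forall>i j. rothstein K h Gam (qfun i) (qfun j) (q,p) = escal 0)
   \<and> (\<forall>i. \<forall>A<K. rothstein K h Gam (qfun i) (pb (\<lambda>_. ebasis A)) (q,p) = escal 0)
   \<and> (\<forall>i j. rothstein K h Gam (rfun K h Gam i) (rfun K h Gam j) (q,p) = escal 0)
   \<and> (\<forall>i. \<forall>A<K. rothstein K h Gam (rfun K h Gam i) (pb (\<lambda>_. ebasis A)) (q,p) = escal 0)"
proof -
  interpret constant_frame U K h Gam q
    using assms by unfold_locales
  show ?thesis
    by (simp add: rothstein_qfun_rfun rothstein_frame_frame rothstein_qfun_qfun rothstein_qfun_frame
        rothstein_rfun_rfun rothstein_rfun_frame)
qed

end
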